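(* Let $d$ and $k$ be integers with $1\le k\le d-1$, let $\Lambda\subseteq\mathbb{R}^d$ be a $d$-dimensional lattice with $\lambda_d(\Lambda,B^d)\le1$, and write $\lambda_i=\lambda_i(\Lambda,B^d)$ for $i\in\{1,\dots,d\}$. Let \[\alpha=\min_{d-k+1\le i\le d}(\lambda_{d-i+1}\cdots\lambda_d)^{-1/(i-1)},\] and let $q\in\{d-k+1,\dots,d\}$ be an integer with $\alpha=(\lambda_{d-q+1}\cdots\lambda_d)^{-1/(q-1)}$. If $q\ge d-k+2$, then: (i) $1/\lambda_i\le\alpha$ for every $i\in\{d-q+1,\dots,d\}$; (ii) $(\lambda_{d-i+2}\cdots\lambda_d)^{(q-i+1)/(i-2)}\le\lambda_{d-q+1}\cdots\lambda_{d-i+1}$ for every $i\in\{3,\dots,d-k+2\}$.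
   Context: $B^d$ is the closed unit Euclidean ball in $\mathbb{R}^d$ centered at the origin. A $d$-dimensional lattice is the set of all integer linear combinations of $d$ linearly independent vectors of $\mathbb{R}^d$. For a lattice $\Lambda$ and a compact convex body $K$ symmetric about the origin, the $i$th successive minimum is $\lambda_i(\Lambda,K)=\inf\{\lambda\in\mathbb{R}:\dim(\Lambda\cap(\lambda K))\ge i\}$; one has $\lambda_1\le\cdots\le\lambda_d$. *)

theory Defs
  imports "HOL-Analysis.Analysis"
begin

definition is_lattice :: "(real^'n) set \<Rightarrow> bool" where
  "is_lattice L \<longleftrightarrow> (\<exists>b :: 'n \<Rightarrow> real^'n. inj b \<and> independent (range b) \<and>
      L = {(\<Sum>j\<in>UNIV. of_int (c j) *\<^sub>R b j) | c :: 'n \<Rightarrow> int. True})"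

definition succ_min :: "(real^'n) set \<Rightarrow> (real^'n) set \<Rightarrow> nat \<Rightarrow> real" where
  "succ_min L K i = Inf {lam :: real. lam > 0 \<and> dim (L \<inter> ((\<lambda>x. lam *\<^sub>R x) ` K)) \<ge> i}"

end

theory Submission
  imports Defs
begin

text \<open>Only positivity and monotonicity of the successive minima enter. Let \<open>P m\<close> be the
  product of the \<open>m\<close> largest minima, so that \<open>alpha = P q powr (-1/(q-1))\<close>. Since
  \<open>P q = lam (d-q+1) * P (q-1)\<close>, minimality of \<open>alpha\<close> against the index \<open>q - 1\<close> forces
  \<open>1 / lam (d-q+1) \<le> alpha\<close>, and (i) follows by monotonicity. For (ii) split \<open>P q = Q * G\<close>
  with \<open>Q\<close> the product of the \<open>q - i + 1\<close> smallest factors; each of them is at least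
  \<open>1 / alpha\<close>, so \<open>(Q * G) powr ((q-i+1)/(q-1)) \<le> Q\<close>, which rearranges to (ii).\<close>

lemma is_lattice_linear_image:
  assumes "is_lattice (L :: (real^'n) set)"
  obtains f :: "real^'n \<Rightarrow> real^'n" where "linear f" "inj f" "L = f ` {v. \<forall>j. v $ j \<in> \<int>}"
proof -
  obtain b :: "'n \<Rightarrow> real^'n" where inj: "inj b" and ind: "independent (range b)"
    and L: "L = {(\<Sum>j\<in>UNIV. of_int (c j) *\<^sub>R b j) | c :: 'n \<Rightarrow> int. True}"
    using assms unfolding is_lattice_def by blast
  define f where "f = (\<lambda>v::real^'n. \<Sum>j\<in>UNIV. v $ j *\<^sub>R b j)"
  have lin: "linear f" unfolding f_def
    by (auto simp: linear_iff scaleR_add_left sum.distrib scaleR_sum_right)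
  have "v = 0" if "f v = 0" for v
  proof -
    have "(\<Sum>u\<in>range b. v $ inv b u *\<^sub>R u) = f v"
      unfolding f_def using inj by (simp add: sum.reindex)
    then have "\<forall>u\<in>range b. v $ inv b u = 0"
      using ind that unfolding independent_explicit by auto
    then show ?thesis using inj by (simp add: vec_eq_iff)
  qed
  then have "inj f" using lin by (simp add: linear_injective_0)
  moreover have "L = f ` {v. \<forall>j. v $ j \<in> \<int>}"
  proof (intro equalityI subsetI)
    fix x assume "x \<in> L"
    then obtain c where "x = (\<Sum>j\<in>UNIV. of_int (c j) *\<^sub>R b j)" using L by blast
    then have "x = f (\<chi> j. of_int (c j))" unfolding f_def by simp
    then show "x \<in> f ` {v. \<forall>j. v $ j \<in> \<int>}" by force
  next
    fix x assume "x \<in> f ` {v. \<forall>j. v $ j \<in> \<int>}"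
    then obtain v where x: "x = f v" and "\<forall>j. v $ j \<in> \<int>" by blast
    then have "v $ j = of_int \<lfloor>v $ j\<rfloor>" for j by (metis Ints_cases floor_of_int)
    then have "x = (\<Sum>j\<in>UNIV. of_int \<lfloor>v $ j\<rfloor> *\<^sub>R b j)" unfolding x f_def by simp
    then show "x \<in> L" unfolding L by (intro CollectI exI[of _ "\<lambda>j. \<lfloor>v $ j\<rfloor>"]) simp
  qed
  ultimately show thesis using that lin by blast
qed

lemma lattice_norm_bounded_below:
  assumes "is_lattice (L :: (real^'n) set)"
  obtains \<delta> where "\<delta> > 0" "\<And>x. x \<in> L \<Longrightarrow> x \<noteq> 0 \<Longrightarrow> \<delta> \<le> norm x"
proof -
  obtain f :: "real^'n \<Rightarrow> real^'n"
    where lin: "linear f" and inj: "inj f" and L: "L = f ` {v. \<forall>j. v $ j \<in> \<int>}"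
    using is_lattice_linear_image[OF assms] by blast
  obtain B where B: "B > 0" "\<And>v. B * norm v \<le> norm (f v)"
    using linear_inj_bounded_below_pos[OF lin inj] by blast
  show thesis
  proof (rule that[OF B(1)])
    fix x assume "x \<in> L" "x \<noteq> 0"
    then obtain v where v: "x = f v" "\<forall>j. v $ j \<in> \<int>" using L by blast
    with \<open>x \<noteq> 0\<close> have "v \<noteq> 0" using linear_0[OF lin] by auto
    then obtain j where "v $ j \<noteq> 0" by (auto simp: vec_eq_iff)
    then have "1 \<le> \<bar>v $ j\<bar>" using v(2) by (simp add: Ints_nonzero_abs_ge1)
    also have "\<dots> \<le> norm v" by (rule component_le_norm_cart)
    finally have "B \<le> B * norm v" using B(1) by simp
    also have "\<dots> \<le> norm x" using B(2) v(1) by simp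
    finally show "B \<le> norm x" .
  qed
qed

lemma lattice_dim_inter_scaled_cball:
  assumes "is_lattice (L :: (real^'n) set)"
  obtains R where "R > 0" "CARD('n) \<le> dim (L \<inter> (\<lambda>x. R *\<^sub>R x) ` cball 0 1)"
proof -
  obtain f :: "real^'n \<Rightarrow> real^'n"
    where lin: "linear f" and inj: "inj f" and L: "L = f ` {v. \<forall>j. v $ j \<in> \<int>}"
    using is_lattice_linear_image[OF assms] by blast
  have "bounded (f ` Basis)" by (simp add: finite_imp_bounded)
  then obtain R where R: "R > 0" "\<forall>y\<in>f ` Basis. norm y \<le> R" by (auto simp: bounded_pos)
  have "f ` Basis \<subseteq> L \<inter> (\<lambda>x. R *\<^sub>R x) ` cball 0 1"
  proof
    fix y assume y: "y \<in> f ` Basis"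
    have "Basis \<subseteq> {v::real^'n. \<forall>j. v $ j \<in> \<int>}"
      by (auto simp: Basis_vec_def axis_def)
    then have "y \<in> L" using y L by blast
    moreover have "y = R *\<^sub>R (y /\<^sub>R R)" "y /\<^sub>R R \<in> cball 0 1"
      using R y by (auto simp: divide_simps)
    ultimately show "y \<in> L \<inter> (\<lambda>x. R *\<^sub>R x) ` cball 0 1" by blast
  qed
  moreover have "independent (f ` Basis)"
    by (rule linear_independent_injective_image[OF lin independent_Basis inj_on_subset[OF inj subset_UNIV]])
  ultimately have "card (f ` Basis) \<le> dim (L \<inter> (\<lambda>x. R *\<^sub>R x) ` cball 0 1)"
    by (rule independent_card_le_dim)
  moreover have "card (f ` Basis) = CARD('n)"
    using inj by (simp add: card_image inj_on_subset)
  ultimately show thesis using that R(1) by simp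
qed

lemma succ_min_mono:
  assumes "i \<le> j" "0 < \<mu>" "j \<le> dim (L \<inter> (\<lambda>x. \<mu> *\<^sub>R x) ` K)"
  shows "succ_min L K i \<le> succ_min L K j"
  unfolding succ_min_def
proof (rule cInf_superset_mono)
  show "{lam. 0 < lam \<and> j \<le> dim (L \<inter> (\<lambda>x. lam *\<^sub>R x) ` K)} \<noteq> {}"
    using assms(2,3) by blast
  show "bdd_below {lam. 0 < lam \<and> i \<le> dim (L \<inter> (\<lambda>x. lam *\<^sub>R x) ` K)}"
    by (rule bdd_belowI[of _ 0]) simp
qed (use assms(1) in auto)

lemma succ_min_pos:
  assumes "is_lattice L" "bounded K" "1 \<le> i"
    and "0 < \<mu>" "i \<le> dim (L \<inter> (\<lambda>x. \<mu> *\<^sub>R x) ` K)"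
  shows "0 < succ_min L K i"
proof -
  obtain \<delta> where \<delta>: "\<delta> > 0" "\<And>x. x \<in> L \<Longrightarrow> x \<noteq> 0 \<Longrightarrow> \<delta> \<le> norm x"
    using lattice_norm_bounded_below[OF assms(1)] by blast
  obtain r where r: "r > 0" "\<forall>y\<in>K. norm y \<le> r"
    using assms(2) by (auto simp: bounded_pos)
  have "\<delta> / r \<le> lam" if lam: "0 < lam" "i \<le> dim (L \<inter> (\<lambda>x. lam *\<^sub>R x) ` K)" for lam
  proof -
    have "\<not> L \<inter> (\<lambda>x. lam *\<^sub>R x) ` K \<subseteq> {0}"
    proof
      assume "L \<inter> (\<lambda>x. lam *\<^sub>R x) ` K \<subseteq> {0}"
      then have "dim (L \<inter> (\<lambda>x. lam *\<^sub>R x) ` K) = 0" by simp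
      then show False using lam(2) assms(3) by linarith
    qed
    then obtain y where y: "y \<in> K" "lam *\<^sub>R y \<in> L" "lam *\<^sub>R y \<noteq> 0" by blast
    have "\<delta> \<le> norm (lam *\<^sub>R y)" using \<delta>(2) y(2,3) .
    also have "\<dots> = lam * norm y" using lam(1) by simp
    also have "\<dots> \<le> lam * r" using r(2) y(1) lam(1) by simp
    finally show ?thesis using r(1) by (simp add: pos_divide_le_eq)
  qed
  then have "\<delta> / r \<le> succ_min L K i"
    unfolding succ_min_def by (intro cInf_greatest) (use assms(4,5) in auto)
  moreover have "0 < \<delta> / r" using \<delta>(1) r(1) by simp
  ultimately show ?thesis by linarith
qed

lemma inverse_le_powr_of_powr_le:
  fixes a P n :: real
  assumes "0 < a" "0 < P" "0 < n"
    and "(a * P) powr (- 1 / (n + 1)) \<le> P powr (- 1 / n)"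
  shows "1 / a \<le> (a * P) powr (- 1 / (n + 1))"
proof -
  have "ln ((a * P) powr (- 1 / (n + 1))) \<le> ln (P powr (- 1 / n))"
    using assms(1,2) by (intro ln_mono[OF assms(4)]) simp
  then have "- 1 / (n + 1) * (ln a + ln P) \<le> - 1 / n * ln P"
    using assms(1,2) by (simp add: ln_mult_pos)
  then have "ln P \<le> n * ln a"
    using assms(3) by (simp add: field_simps)
  then have "(ln a + ln P) / (n + 1) \<le> ln a"
    using assms(3) by (simp add: field_simps)
  then show ?thesis
    using assms(1,2) by (simp add: ln_divide_pos ln_mult_pos flip: ln_le_cancel_iff)
qed

lemma powr_le_of_powr_product_le:
  fixes Q G s t :: real
  assumes "0 < Q" "0 < G" "0 < s" "0 < t" "(Q * G) powr (s / (s + t)) \<le> Q"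
  shows "G powr (s / t) \<le> Q"
proof -
  have "s / (s + t) * (ln Q + ln G) \<le> ln Q"
    using assms by (simp add: ln_mult_pos flip: ln_le_cancel_iff)
  then have "s * ln G \<le> t * ln Q"
    using assms(3,4) by (simp add: field_simps)
  then have "s / t * ln G \<le> ln Q"
    using assms(4) by (simp add: field_simps)
  then show ?thesis
    using assms(1,2) by (simp flip: ln_le_cancel_iff)
qed

lemma inverse_le_powr_top_product:
  fixes lam :: "nat \<Rightarrow> real"
  assumes pos: "\<And>j. 1 \<le> j \<Longrightarrow> j \<le> d \<Longrightarrow> 0 < lam j"
    and mono: "\<And>i j. 1 \<le> i \<Longrightarrow> i \<le> j \<Longrightarrow> j \<le> d \<Longrightarrow> lam i \<le> lam j"
    and "3 \<le> q" "q \<le> d"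
    and "(\<Prod>j\<in>{d-q+1..d}. lam j) powr (- 1 / (real q - 1))
           \<le> (\<Prod>j\<in>{d-(q-1)+1..d}. lam j) powr (- 1 / (real (q-1) - 1))"
  shows "\<forall>i\<in>{d-q+1..d}. 1 / lam i \<le> (\<Prod>j\<in>{d-q+1..d}. lam j) powr (- 1 / (real q - 1))"
proof
  fix i assume i: "i \<in> {d-q+1..d}"
  define a where "a = lam (d-q+1)"
  define P where "P = (\<Prod>j\<in>{d-(q-1)+1..d}. lam j)"
  have a: "0 < a" unfolding a_def using assms(3,4) by (intro pos) auto
  have P: "0 < P" unfolding P_def by (intro prod_pos) (auto intro: pos)
  have "(\<Prod>j\<in>{d-q+1..d}. lam j) = a * P"
    unfolding a_def P_def using assms(3,4)
    by (simp add: prod.atLeast_Suc_atMost Suc_diff_le)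
  moreover have "real q - 1 = (real q - 2) + 1" "real (q-1) - 1 = real q - 2"
    using assms(3) by auto
  ultimately have "1 / a \<le> (\<Prod>j\<in>{d-q+1..d}. lam j) powr (- 1 / (real q - 1))"
    using inverse_le_powr_of_powr_le[OF a P, of "real q - 2"] assms(3,5) P_def by simp
  moreover have "a \<le> lam i" unfolding a_def using i by (intro mono) auto
  then have "1 / lam i \<le> 1 / a" using a by (simp add: frac_le)
  ultimately show "1 / lam i \<le> (\<Prod>j\<in>{d-q+1..d}. lam j) powr (- 1 / (real q - 1))"
    by linarith
qed

lemma top_product_powr_le_bottom_product:
  fixes lam :: "nat \<Rightarrow> real"
  assumes pos: "\<And>j. 1 \<le> j \<Longrightarrow> j \<le> d \<Longrightarrow> 0 < lam j"
    and "3 \<le> i" "i \<le> q" "q \<le> d"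
    and inv: "\<forall>j\<in>{d-q+1..d}. 1 / lam j \<le> (\<Prod>j\<in>{d-q+1..d}. lam j) powr (- 1 / (real q - 1))"
  shows "(\<Prod>j\<in>{d-i+2..d}. lam j) powr ((real q - real i + 1) / (real i - 2))
           \<le> (\<Prod>j\<in>{d-q+1..d-i+1}. lam j)"
proof -
  define G where "G = (\<Prod>j\<in>{d-i+2..d}. lam j)"
  define Q where "Q = (\<Prod>j\<in>{d-q+1..d-i+1}. lam j)"
  define m where "m = q - i + 1"
  have G: "0 < G" unfolding G_def by (intro prod_pos) (auto intro: pos)
  have Q: "0 < Q" unfolding Q_def using assms(2-4) by (intro prod_pos) (auto intro: pos)
  have "{d-q+1..d} = {d-q+1..d-i+1} \<union> {d-i+2..d}" using assms(2-4) by auto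
  then have QG: "(\<Prod>j\<in>{d-q+1..d}. lam j) = Q * G"
    unfolding Q_def G_def by (simp add: prod.union_disjoint)
  define \<alpha> where "\<alpha> = (Q * G) powr (- 1 / (real q - 1))"
  have \<alpha>: "0 < \<alpha>" unfolding \<alpha>_def using Q G by simp
  have "1 / \<alpha> \<le> lam j" if j: "j \<in> {d-q+1..d-i+1}" for j
  proof -
    have "0 < lam j" using j assms(2-4) by (intro pos) auto
    moreover have "j \<in> {d-q+1..d}" using j assms(2-4) by auto
    then have "1 / lam j \<le> \<alpha>" using inv QG unfolding \<alpha>_def by auto
    ultimately show ?thesis using \<alpha> by (simp add: field_simps)
  qed
  then have "(\<Prod>j\<in>{d-q+1..d-i+1}. 1 / \<alpha>) \<le> Q"
    unfolding Q_def using \<alpha> by (intro prod_mono) auto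
  moreover have "card {d-q+1..d-i+1} = m" unfolding m_def using assms(2-4) by auto
  ultimately have "(1 / \<alpha>) ^ m \<le> Q" by simp
  moreover have "1 / \<alpha> = (Q * G) powr (1 / (real q - 1))"
    unfolding \<alpha>_def by (simp add: powr_minus_divide)
  then have "(1 / \<alpha>) ^ m = (Q * G) powr (real m / (real q - 1))"
    using Q G by (simp add: powr_powr flip: powr_realpow)
  moreover have "real m / (real q - 1) = (real q - real i + 1) / ((real q - real i + 1) + (real i - 2))"
    unfolding m_def using assms(3) by (simp add: of_nat_diff)
  ultimately have "(Q * G) powr ((real q - real i + 1) / ((real q - real i + 1) + (real i - 2))) \<le> Q"
    by simp
  then have "G powr ((real q - real i + 1) / (real i - 2)) \<le> Q"
    using assms(2,3) by (intro powr_le_of_powr_product_le[OF Q G]) auto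
  then show ?thesis unfolding G_def Q_def .
qed

theorem lemma2:
  fixes L :: "(real^'n) set" and k q :: nat and alpha :: real
  defines "d \<equiv> CARD('n)"
  defines "lam \<equiv> (\<lambda>i. succ_min L (cball 0 1) i)"
  defines "alpha \<equiv> Min ((\<lambda>i. (\<Prod>j\<in>{d-i+1..d}. lam j) powr (- 1 / (real i - 1))) ` {d-k+1..d})"
  assumes "1 \<le> k" and "k \<le> d - 1"
    and "is_lattice L"
    and "lam d \<le> 1"
    and "q \<in> {d-k+1..d}"
    and "alpha = (\<Prod>j\<in>{d-q+1..d}. lam j) powr (- 1 / (real q - 1))"
    and "q \<ge> d - k + 2"
  shows "(\<forall>i\<in>{d-q+1..d}. 1 / lam i \<le> alpha) \<and>
         (\<forall>i\<in>{3..d-k+2}. (\<Prod>j\<in>{d-i+2..d}. lam j) powr ((real q - real i + 1) / (real i - 2))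
              \<le> (\<Prod>j\<in>{d-q+1..d-i+1}. lam j))"
proof -
  have q: "3 \<le> q" "q \<le> d" using assms(5,8,10) by auto
  obtain R where R: "0 < R" "d \<le> dim (L \<inter> (\<lambda>x. R *\<^sub>R x) ` cball 0 1)"
    using lattice_dim_inter_scaled_cball[OF assms(6)] unfolding d_def by blast
  have pos: "0 < lam j" if "1 \<le> j" "j \<le> d" for j
    unfolding lam_def using that R by (intro succ_min_pos[OF assms(6) bounded_cball _ R(1)]) auto
  have mono: "lam i \<le> lam j" if "1 \<le> i" "i \<le> j" "j \<le> d" for i j
    unfolding lam_def using that R by (intro succ_min_mono[OF _ R(1)]) auto
  have "alpha \<le> (\<Prod>j\<in>{d-(q-1)+1..d}. lam j) powr (- 1 / (real (q-1) - 1))"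
    unfolding alpha_def using assms(10) q
    by (intro Min_le finite_imageI image_eqI[where x = "q - 1"]) auto
  then have inverse_le: "\<forall>i\<in>{d-q+1..d}. 1 / lam i \<le> alpha"
    using inverse_le_powr_top_product[of d lam, OF pos mono q] assms(9) by simp
  moreover have "\<forall>i\<in>{3..d-k+2}. (\<Prod>j\<in>{d-i+2..d}. lam j) powr ((real q - real i + 1) / (real i - 2))
      \<le> (\<Prod>j\<in>{d-q+1..d-i+1}. lam j)"
    using top_product_powr_le_bottom_product[of d lam, OF pos _ _ q(2) inverse_le[unfolded assms(9)]]
      assms(10) by auto
  ultimately show ?thesis by blast
qed

end
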